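(* Let $A, B, C, F \in \mathbb{R}^{n\times n}$ with $A$ invertible, and suppose $\sigma_{\max}(CA^{-1}B) < 1$. Then the matrix equation $$AX + B\lvert CX\rvert = F$$ has exactly one solution $X \in \mathbb{R}^{n\times n}$.
   Context: $\sigma_{\max}(\cdot)$ is the largest singular value and $\lvert M\rvert$ the entrywise absolute value of a matrix $M$. *)

theory Defs
  imports "HOL-Analysis.Analysis"
begin

definition singular_values :: "real^'n^'n \<Rightarrow> real set" where
  "singular_values M = {s. s \<ge> 0 \<and> (\<exists>v. v \<noteq> 0 \<and> (transpose M ** M) *v v = (s^2) *\<^sub>R v)}"

definition sigma_max :: "real^'n^'n \<Rightarrow> real" where
  "sigma_max M = Max (singular_values M)"

definition mat_abs :: "real^'n^'m \<Rightarrow> real^'n^'m" where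
  "mat_abs M = (\<chi> i j. \<bar>M $ i $ j\<bar>)"

end

theory Submission
  imports Defs
begin

text \<open>With Z = C X the equation becomes the fixed point problem
  Z = C A^-1 F - C A^-1 B |Z|, and X is recovered as A^-1 (F - B |Z|).
  The norm of real^'n^'n is the Frobenius norm; taking absolute values entrywise is
  1-Lipschitz for it, and multiplying by M from the left is sigma_max(M)-Lipschitz
  (apply the operator bound column by column). So the right-hand side is a contraction and
  Banach's fixed point theorem applies. The operator bound holds because a maximiser v of
  |M v| on the unit sphere is an eigenvector of M^T M: with s = |M v| the symmetric
  matrix s^2 I - M^T M is positive semidefinite and its quadratic form vanishes at v.\<close>

lemma quadratic_nonneg_imp_linear_coeff_eq_0:
  fixes a b :: real
  assumes "\<And>t. 0 \<le> t * a + t\<^sup>2 * b"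
  shows "a = 0"
proof -
  define c where "c = \<bar>b\<bar> + 1"
  have "c > 0" "b - c \<le> -1" by (auto simp: c_def)
  have "0 \<le> (- a / c) * a + (- a / c)\<^sup>2 * b" by (rule assms)
  also have "\<dots> = a\<^sup>2 * (b - c) / c\<^sup>2"
    using \<open>c > 0\<close> by (simp add: field_simps power2_eq_square)
  also have "\<dots> \<le> - a\<^sup>2 / c\<^sup>2"
    using divide_right_mono[OF mult_left_mono[OF \<open>b - c \<le> -1\<close> zero_le_power2], of "c\<^sup>2" a]
    by simp
  finally show ?thesis using \<open>c > 0\<close> by (simp add: divide_simps)
qed

lemma positive_semidefinite_null_vector:
  fixes K :: "real^'n^'n"
  assumes sym: "\<And>x y. x \<bullet> (K *v y) = y \<bullet> (K *v x)" and psd: "\<And>u. 0 \<le> u \<bullet> (K *v u)"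
    and null: "v \<bullet> (K *v v) = 0"
  shows "K *v v = 0"
proof -
  let ?w = "K *v v"
  have "0 \<le> t * (2 * (?w \<bullet> ?w)) + t\<^sup>2 * (?w \<bullet> (K *v ?w))" for t
  proof -
    have "0 \<le> (v + t *\<^sub>R ?w) \<bullet> (K *v (v + t *\<^sub>R ?w))" by (rule psd)
    also have "\<dots> = t * (2 * (?w \<bullet> ?w)) + t\<^sup>2 * (?w \<bullet> (K *v ?w))"
      using null sym[of v ?w]
      by (simp add: matrix_vector_right_distrib matrix_vector_mult_scaleR inner_add_left
          inner_add_right power2_eq_square algebra_simps)
    finally show ?thesis .
  qed
  then have "2 * (?w \<bullet> ?w) = 0" by (rule quadratic_nonneg_imp_linear_coeff_eq_0)
  then show ?thesis by simp
qed

lemma inner_transpose_mult_self_mult: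
  fixes M :: "real^'n^'m"
  shows "v \<bullet> ((transpose M ** M) *v w) = (M *v v) \<bullet> (M *v w)"
  by (metis dot_lmul_matrix matrix_vector_mul_assoc transpose_matrix_vector inner_commute)

lemma finite_singular_values:
  fixes M :: "real^'n^'n"
  shows "finite (singular_values M)"
proof -
  let ?P = "transpose M ** M"
  define v where "v s = (SOME v. v \<noteq> 0 \<and> ?P *v v = s\<^sup>2 *\<^sub>R v)" for s
  have v: "v s \<noteq> 0" "?P *v v s = s\<^sup>2 *\<^sub>R v s" if "s \<in> singular_values M" for s
  proof -
    have "\<exists>v. v \<noteq> 0 \<and> ?P *v v = s\<^sup>2 *\<^sub>R v" using that by (auto simp: singular_values_def)
    from someI_ex[OF this] show "v s \<noteq> 0" "?P *v v s = s\<^sup>2 *\<^sub>R v s" by (simp_all add: v_def)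
  qed
  have orth: "v s \<bullet> v t = 0"
    if "s \<in> singular_values M" "t \<in> singular_values M" "s \<noteq> t" for s t
  proof -
    have "s\<^sup>2 \<noteq> t\<^sup>2" using that by (auto simp: singular_values_def power2_eq_iff_nonneg)
    have "t\<^sup>2 * (v s \<bullet> v t) = v s \<bullet> (?P *v v t)" using v(2)[OF that(2)] by simp
    also have "\<dots> = v t \<bullet> (?P *v v s)" by (simp add: inner_transpose_mult_self_mult inner_commute)
    also have "\<dots> = s\<^sup>2 * (v s \<bullet> v t)" using v(2)[OF that(1)] by (simp add: inner_commute)
    finally show ?thesis using \<open>s\<^sup>2 \<noteq> t\<^sup>2\<close> by simp
  qed
  have "inj_on v (singular_values M)"
    using orth v(1) by (fastforce intro: inj_onI)
  moreover have "independent (v ` singular_values M)"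
    using orth v(1) by (intro pairwise_orthogonal_independent) (auto simp: pairwise_def orthogonal_def)
  then have "finite (v ` singular_values M)" using independent_bound by blast
  ultimately show ?thesis using finite_imageD by blast
qed

lemma singular_value_le_norm_bound:
  fixes M :: "real^'n^'n"
  assumes "s \<in> singular_values M" and bound: "\<And>v. norm (M *v v) \<le> c * norm v"
  shows "s \<le> c"
proof -
  obtain w where w: "w \<noteq> 0" "(transpose M ** M) *v w = s\<^sup>2 *\<^sub>R w" "s \<ge> 0"
    using assms(1) by (auto simp: singular_values_def)
  have "(norm (M *v w))\<^sup>2 = w \<bullet> ((transpose M ** M) *v w)"
    by (simp add: inner_transpose_mult_self_mult dot_square_norm)
  also have "\<dots> = (s * norm w)\<^sup>2"
    using w(2) by (simp add: power_mult_distrib dot_square_norm)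
  finally have "s * norm w \<le> c * norm w"
    using bound[of w] w(3) by (simp add: power2_eq_iff_nonneg)
  then show ?thesis using w(1) by simp
qed

lemma exists_singular_value_norm_bound:
  fixes M :: "real^'n^'n"
  obtains s where "s \<in> singular_values M" "\<And>v. norm (M *v v) \<le> s * norm v"
proof -
  have "compact (sphere (0::real^'n) 1)" "sphere (0::real^'n) 1 \<noteq> {}"
    using vector_choose_size[of 1] by (auto simp: dist_norm)
  moreover have "continuous_on (sphere 0 1) (\<lambda>v. norm (M *v v))"
    by (intro continuous_intros linear_continuous_on matrix_vector_mul_bounded_linear)
  ultimately obtain v0 where v0: "norm v0 = 1"
    and max: "\<And>u. norm u = 1 \<Longrightarrow> norm (M *v u) \<le> norm (M *v v0)"
    using continuous_attains_sup[of "sphere (0::real^'n) 1" "\<lambda>v. norm (M *v v)"] by auto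
  define s where "s = norm (M *v v0)"
  have bound: "norm (M *v u) \<le> s * norm u" for u
  proof (cases "u = 0")
    case False
    have "norm (M *v u) / norm u = norm (M *v (u /\<^sub>R norm u))"
      by (simp add: matrix_vector_mult_scaleR divide_inverse_commute)
    also have "\<dots> \<le> s" unfolding s_def using False by (intro max) simp
    finally show ?thesis using False by (simp add: divide_le_eq mult.commute)
  qed simp
  define K where "K = s\<^sup>2 *\<^sub>R mat 1 - transpose M ** M"
  have K: "K *v x = s\<^sup>2 *\<^sub>R x - (transpose M ** M) *v x" for x
    by (simp add: K_def matrix_vector_mult_diff_rdistrib flip: scaleR_matrix_vector_assoc)
  have form: "x \<bullet> (K *v y) = s\<^sup>2 * (x \<bullet> y) - (M *v x) \<bullet> (M *v y)" for x y
    by (simp add: K inner_diff_right inner_transpose_mult_self_mult)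
  have "K *v v0 = 0"
  proof (rule positive_semidefinite_null_vector)
    show "x \<bullet> (K *v y) = y \<bullet> (K *v x)" for x y by (simp add: form inner_commute)
    show "0 \<le> u \<bullet> (K *v u)" for u
      using power_mono[OF bound[of u] norm_ge_zero]
      by (simp add: form power_mult_distrib dot_square_norm)
    show "v0 \<bullet> (K *v v0) = 0" by (simp add: form v0 s_def dot_square_norm)
  qed
  then have "(transpose M ** M) *v v0 = s\<^sup>2 *\<^sub>R v0" by (simp add: K)
  moreover have "v0 \<noteq> 0" "s \<ge> 0" using v0 by (auto simp: s_def)
  ultimately have "s \<in> singular_values M" unfolding singular_values_def by blast
  then show ?thesis using bound that by blast
qed

lemma sigma_max_operator_bound:
  fixes M :: "real^'n^'n"
  shows sigma_max_in_singular_values: "sigma_max M \<in> singular_values M"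
    and norm_matrix_vector_le_sigma_max: "norm (M *v v) \<le> sigma_max M * norm v"
proof -
  obtain s where s: "s \<in> singular_values M" "\<And>v. norm (M *v v) \<le> s * norm v"
    using exists_singular_value_norm_bound[of M] by blast
  have "sigma_max M = s"
    unfolding sigma_max_def
    using finite_singular_values s(1) singular_value_le_norm_bound[OF _ s(2)] by (intro Max_eqI)
  then show "sigma_max M \<in> singular_values M" "norm (M *v v) \<le> sigma_max M * norm v"
    using s by simp_all
qed

lemma sigma_max_nonneg: "0 \<le> sigma_max M"
  using sigma_max_in_singular_values[of M] by (simp add: singular_values_def)

lemma norm_sq_eq_sum_column_norm_sq:
  fixes D :: "real^'n^'m"
  shows "(norm D)\<^sup>2 = (\<Sum>j\<in>UNIV. (norm (column j D))\<^sup>2)"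
  by (simp add: power2_norm_eq_inner inner_vec_def column_def) (rule sum.swap)

lemma column_matrix_mult: "column j (M ** D) = M *v column j D"
  by (simp add: vec_eq_iff matrix_matrix_mult_def matrix_vector_mult_def column_def)

lemma norm_matrix_mult_le_sigma_max:
  fixes M :: "real^'n^'n" and D :: "real^'k^'n"
  shows "norm (M ** D) \<le> sigma_max M * norm D"
proof -
  have "(norm (M ** D))\<^sup>2 \<le> (sigma_max M * norm D)\<^sup>2"
    unfolding power_mult_distrib norm_sq_eq_sum_column_norm_sq column_matrix_mult sum_distrib_left
    by (intro sum_mono)
      (simp add: power_mono norm_matrix_vector_le_sigma_max flip: power_mult_distrib)
  then show ?thesis by (rule power2_le_imp_le) (simp add: sigma_max_nonneg)
qed

lemma norm_mat_abs_diff_le: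
  fixes Z W :: "real^'n^'m"
  shows "norm (mat_abs Z - mat_abs W) \<le> norm (Z - W)"
  unfolding norm_vec_def by (intro L2_set_mono) (auto simp: mat_abs_def abs_triangle_ineq3)

lemma matrix_diff_ldistrib:
  fixes A :: "'a::ring_1^'n^'m"
  shows "A ** (B - C) = A ** B - A ** C"
  by (simp add: matrix_matrix_mult_def vec_eq_iff sum_subtractf algebra_simps)

lemma ex1_fixpoint_affine_mat_abs:
  fixes M :: "real^'n^'n" and G :: "real^'k^'n"
  assumes "sigma_max M < 1"
  shows "\<exists>!Z. G - M ** mat_abs Z = Z"
proof (rule banach_fix_type[OF sigma_max_nonneg assms], intro allI)
  fix Z W :: "real^'k^'n"
  have "dist (G - M ** mat_abs Z) (G - M ** mat_abs W) = norm (M ** (mat_abs W - mat_abs Z))"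
    by (simp add: dist_norm matrix_diff_ldistrib)
  also have "\<dots> \<le> sigma_max M * norm (mat_abs W - mat_abs Z)"
    by (rule norm_matrix_mult_le_sigma_max)
  also have "\<dots> \<le> sigma_max M * dist Z W"
    by (simp add: dist_norm norm_minus_commute mult_left_mono norm_mat_abs_diff_le sigma_max_nonneg)
  finally show "dist (G - M ** mat_abs Z) (G - M ** mat_abs W) \<le> sigma_max M * dist Z W" .
qed

lemma ex1_fixpoint_swap_comp:
  assumes "\<exists>!z. c (g z) = z"
  shows "\<exists>!x. g (c x) = x"
proof -
  from assms obtain z where z: "c (g z) = z" and uniq: "\<And>y. c (g y) = y \<Longrightarrow> y = z" by blast
  show ?thesis
  proof (rule ex1I)
    show "g (c (g z)) = g z" using z by simp
  next
    fix x assume x: "g (c x) = x"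
    then have "c x = z" using uniq[of "c x"] by simp
    then show "x = g z" using x by simp
  qed
qed

lemma invertible_matrix_inv:
  fixes A :: "'a::semiring_1^'n^'m"
  assumes "invertible A"
  shows "A ** matrix_inv A = mat 1" "matrix_inv A ** A = mat 1"
  using someI_ex[OF assms[unfolded invertible_def]] by (auto simp: matrix_inv_def)

lemma invertible_mult_eq_iff:
  fixes A :: "'a::semiring_1^'n^'m"
  assumes "invertible A"
  shows "A ** X = Y \<longleftrightarrow> X = matrix_inv A ** Y"
  using invertible_matrix_inv[OF assms] by (metis matrix_mul_assoc matrix_mul_lid)

theorem proposition4p1:
  fixes A B C F :: "real^'n^'n"
  assumes "invertible A"
    and "sigma_max (C ** matrix_inv A ** B) < 1"
  shows "\<exists>!X :: real^'n^'n. A ** X + B ** mat_abs (C ** X) = F"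
proof -
  let ?g = "\<lambda>Z. matrix_inv A ** (F - B ** mat_abs Z)"
  have "C ** ?g Z = C ** matrix_inv A ** F - (C ** matrix_inv A ** B) ** mat_abs Z" for Z
    by (simp add: matrix_diff_ldistrib matrix_mul_assoc)
  then have "\<exists>!Z. C ** ?g Z = Z" using ex1_fixpoint_affine_mat_abs[OF assms(2)] by simp
  then have "\<exists>!X. ?g (C ** X) = X" by (rule ex1_fixpoint_swap_comp)
  moreover have "A ** X + B ** mat_abs (C ** X) = F \<longleftrightarrow> ?g (C ** X) = X" for X
    unfolding eq_commute[of "?g _"] invertible_mult_eq_iff[OF assms(1), symmetric]
    by (simp add: eq_diff_eq)
  ultimately show ?thesis by simp
qed

end
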